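(* $(\mathbb{S},\tau^{-1})$ is a final coalgebra for $M\otimes-\colon\mathsf{SquaSet}\to\mathsf{SquaSet}$.
   Context: Let $M_0=\{(r,s)\in[0,1]^2: r\in\{0,1\}\text{ or } s\in\{0,1\}\}$. A square set is a pair $(X,S_X)$ with $X$ a set and $S_X\colon M_0\to X$ injective; $\mathsf{SquaSet}$ has square sets as objects and maps $f$ with $f\circ S_X=S_Y$ as morphisms. Let $N=\{0,1,2\}^2$, $M=N\setminus\{(1,1)\}$, also viewed as points of $\mathbb{R}^2$. For a square set $X$, $M\otimes X=(M\times X)/\!\sim$, where $\sim$ is the equivalence relation generated by $(m,S_X(p))\sim(n,S_X(q))$ whenever $m,n\in M$ differ by exactly $1$ in exactly one coordinate and $(m+p)/3=(n+q)/3$; $m\otimes x$ denotes the class of $(m,x)$; $S_{M\otimes X}(p)=m\otimes S_X(3p-m)$ for any $m\in M$ with $p\in(m+[0,1]^2)/3$; $(M\otimes f)(m\otimes x)=m\otimes f(x)$. The Sierpinski carpet $\mathbb{S}$ is the unique nonempty compact $K\subseteq[0,1]^2$ with $K=\bigcup_{m\in M}\frac13(m+K)$, with $S_{\mathbb{S}}$ the inclusion of $M_0$. $\tau\colon M\otimes\mathbb{S}\to\mathbb{S}$, $\tau(m\otimes s)=\frac13(m+s)$, is a bijection. A coalgebra is $(A,a\colon A\to FA)$; a final coalgebra admits a unique coalgebra morphism $h$ (with $b\circ h=Fh\circ a$) from every coalgebra. *)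

theory Defs
  imports "HOL-Analysis.Analysis"
begin

type_synonym pt = "real \<times> real"

definition M0 :: "pt set" where
  "M0 = {(r,s). 0 \<le> r \<and> r \<le> 1 \<and> 0 \<le> s \<and> s \<le> 1 \<and>
                 (r = 0 \<or> r = 1 \<or> s = 0 \<or> s = 1)}"

definition unit_sq :: "pt set" where
  "unit_sq = {(r,s). 0 \<le> r \<and> r \<le> 1 \<and> 0 \<le> s \<and> s \<le> 1}"

definition square_set :: "'a set \<Rightarrow> (pt \<Rightarrow> 'a) \<Rightarrow> bool" where
  "square_set X S \<longleftrightarrow> S ` M0 \<subseteq> X \<and> inj_on S M0"

definition squaset_mor :: "'a set \<Rightarrow> (pt \<Rightarrow> 'a) \<Rightarrow> 'b set \<Rightarrow> (pt \<Rightarrow> 'b) \<Rightarrow> ('a \<Rightarrow> 'b) \<Rightarrow> bool" where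
  "squaset_mor X S Y T f \<longleftrightarrow> f ` X \<subseteq> Y \<and> (\<forall>p\<in>M0. f (S p) = T p)"

definition Mset :: "(int \<times> int) set" where
  "Mset = ({0,1,2} \<times> {0,1,2}) - {(1,1)}"

definition cellpt :: "int \<times> int \<Rightarrow> pt \<Rightarrow> pt" where
  "cellpt m p = ((of_int (fst m) + fst p) / 3, (of_int (snd m) + snd p) / 3)"

definition uncell :: "int \<times> int \<Rightarrow> pt \<Rightarrow> pt" where
  "uncell m p = (3 * fst p - of_int (fst m), 3 * snd p - of_int (snd m))"

definition adjacent :: "int \<times> int \<Rightarrow> int \<times> int \<Rightarrow> bool" where
  "adjacent m n \<longleftrightarrow> (fst m = fst n \<and> \<bar>snd m - snd n\<bar> = 1) \<or>
                     (snd m = snd n \<and> \<bar>fst m - fst n\<bar> = 1)"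

definition glue_gen :: "(pt \<Rightarrow> 'a) \<Rightarrow> ((int \<times> int) \<times> 'a) rel" where
  "glue_gen S = {((m, S p), (n, S q)) | m n p q.
      m \<in> Mset \<and> n \<in> Mset \<and> adjacent m n \<and> p \<in> M0 \<and> q \<in> M0 \<and> cellpt m p = cellpt n q}"

definition glue_rel :: "'a set \<Rightarrow> (pt \<Rightarrow> 'a) \<Rightarrow> ((int \<times> int) \<times> 'a) rel" where
  "glue_rel X S = Id_on (Mset \<times> X) \<union> (glue_gen S \<union> (glue_gen S)\<inverse>)\<^sup>+"

definition tensor_carrier :: "'a set \<Rightarrow> (pt \<Rightarrow> 'a) \<Rightarrow> ((int \<times> int) \<times> 'a) set set" where
  "tensor_carrier X S = (Mset \<times> X) // glue_rel X S"

definition tensor_el :: "'a set \<Rightarrow> (pt \<Rightarrow> 'a) \<Rightarrow> int \<times> int \<Rightarrow> 'a \<Rightarrow> ((int \<times> int) \<times> 'a) set" where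
  "tensor_el X S m x = glue_rel X S `` {(m, x)}"

definition tensor_S :: "'a set \<Rightarrow> (pt \<Rightarrow> 'a) \<Rightarrow> pt \<Rightarrow> ((int \<times> int) \<times> 'a) set" where
  "tensor_S X S p = (let m = (SOME m. m \<in> Mset \<and> p \<in> cellpt m ` unit_sq)
                     in tensor_el X S m (S (uncell m p)))"

definition tensor_map :: "'b set \<Rightarrow> (pt \<Rightarrow> 'b) \<Rightarrow> ('a \<Rightarrow> 'b) \<Rightarrow>
    ((int \<times> int) \<times> 'a) set \<Rightarrow> ((int \<times> int) \<times> 'b) set" where
  "tensor_map Y T f c = (let (m, x) = (SOME mx. mx \<in> c) in tensor_el Y T m (f x))"

definition carpet :: "pt set" where
  "carpet = (THE K. K \<noteq> {} \<and> compact K \<and> K \<subseteq> unit_sq \<and>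
                    K = (\<Union>m\<in>Mset. cellpt m ` K))"

definition S_carpet :: "pt \<Rightarrow> pt" where
  "S_carpet p = p"

definition tau :: "((int \<times> int) \<times> pt) set \<Rightarrow> pt" where
  "tau c = (let (m, s) = (SOME ms. ms \<in> c) in cellpt m s)"

definition tau_inv :: "pt \<Rightarrow> ((int \<times> int) \<times> pt) set" where
  "tau_inv = inv_into (tensor_carrier carpet S_carpet) tau"

definition coalgebra :: "'a set \<Rightarrow> (pt \<Rightarrow> 'a) \<Rightarrow> ('a \<Rightarrow> ((int \<times> int) \<times> 'a) set) \<Rightarrow> bool" where
  "coalgebra A SA a \<longleftrightarrow> square_set A SA \<and>
     squaset_mor A SA (tensor_carrier A SA) (tensor_S A SA) a"

definition coalg_mor :: "'a set \<Rightarrow> (pt \<Rightarrow> 'a) \<Rightarrow> ('a \<Rightarrow> ((int \<times> int) \<times> 'a) set) \<Rightarrow>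
    'b set \<Rightarrow> (pt \<Rightarrow> 'b) \<Rightarrow> ('b \<Rightarrow> ((int \<times> int) \<times> 'b) set) \<Rightarrow> ('a \<Rightarrow> 'b) \<Rightarrow> bool" where
  "coalg_mor A SA a B SB b h \<longleftrightarrow> squaset_mor A SA B SB h \<and>
     (\<forall>x\<in>A. b (h x) = tensor_map B SB h (a x))"

end

theory Submission
  imports Defs
begin

(* The eight maps p \<mapsto> (m + p)/3 contract distances by 1/3, so a bounded map g with
   g x = (m x + g (next x))/3 is unique, and a closed invariant set contains every bounded
   self-covering set; the latter gives uniqueness of the carpet, realised as the closure of the
   orbit of M0.  The map tau is a bijection: equal points (m + s)/3 = (n + t)/3 of the carpet come
   from equal cells or from cells meeting along an edge, possibly through a third cell at a
   corner, and such representatives are identified by the gluing.  For a coalgebra a, writing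
   a x = m \<otimes> x' and iterating yields a sequence of cells; the point with these ternary digits
   is the image of x.  Any morphism h satisfies h x = (m + h x')/3, hence equals this map by
   the contraction argument, which also shows that the boundary point S_A p is sent to p. *)

section \<open>The carpet as an attractor\<close>

definition hutchinson :: "pt set \<Rightarrow> pt set" where
  "hutchinson K = (\<Union>m\<in>Mset. cellpt m ` K)"

lemma finite_Mset: "finite Mset"
  by (simp add: Mset_def)

lemma Mset_coords: "m \<in> Mset \<Longrightarrow> fst m \<in> {0,1,2} \<and> snd m \<in> {0,1,2} \<and> m \<noteq> (1,1)"
  by (auto simp: Mset_def)

lemma cellpt_scaleR: "cellpt m p = (1/3) *\<^sub>R ((of_int (fst m), of_int (snd m)) + p)"
  by (simp add: cellpt_def scaleR_prod_def add_divide_distrib)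

lemma dist_cellpt: "dist (cellpt m p) (cellpt m q) = dist p q / 3"
  by (simp add: cellpt_scaleR dist_norm flip: scaleR_diff_right)

lemma uncell_cellpt [simp]: "uncell m (cellpt m p) = p"
  by (cases p) (simp add: uncell_def cellpt_def field_simps)

lemma continuous_on_cellpt: "continuous_on S (cellpt m)"
  unfolding cellpt_def by (intro continuous_intros) auto

lemma cellpt_in_unit_sq: "m \<in> Mset \<Longrightarrow> p \<in> unit_sq \<Longrightarrow> cellpt m p \<in> unit_sq"
  by (cases p) (auto simp: Mset_def cellpt_def unit_sq_def)

lemma M0_subset_unit_sq: "M0 \<subseteq> unit_sq"
  by (auto simp: M0_def unit_sq_def)

lemma compact_unit_sq: "compact unit_sq"
proof -
  have "unit_sq = {0..1} \<times> {0..1}"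
    by (auto simp: unit_sq_def)
  then show ?thesis
    by (metis compact_Icc compact_Times)
qed

lemma dist_le_2_if_in_unit_sq:
  assumes "p \<in> unit_sq" "q \<in> unit_sq"
  shows "dist p q \<le> 2"
proof -
  have "dist p q = sqrt ((fst p - fst q)\<^sup>2 + (snd p - snd q)\<^sup>2)"
    by (simp add: dist_prod_def dist_real_def)
  also have "\<dots> \<le> \<bar>fst p - fst q\<bar> + \<bar>snd p - snd q\<bar>"
    by (rule sqrt_sum_squares_le_sum_abs)
  also have "\<dots> \<le> 2"
    using assms by (auto simp: unit_sq_def)
  finally show ?thesis .
qed

lemma hutchinson_mono: "K \<subseteq> L \<Longrightarrow> hutchinson K \<subseteq> hutchinson L"
  by (auto simp: hutchinson_def)

lemma compact_hutchinson: "compact K \<Longrightarrow> compact (hutchinson K)"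
  unfolding hutchinson_def
  by (intro compact_UN finite_Mset compact_continuous_image continuous_on_cellpt)

lemma nonpos_if_contracting:
  fixes D :: "'a \<Rightarrow> real"
  assumes "1 < r"
    and bounded: "\<And>y. y \<in> B \<Longrightarrow> D y \<le> c"
    and contracting: "\<And>y. y \<in> B \<Longrightarrow> \<exists>y'\<in>B. r * D y \<le> D y'"
    and "y \<in> B"
  shows "D y \<le> 0"
proof -
  have "\<forall>y\<in>B. D y \<le> c * (1/r) ^ n" for n
  proof (induction n)
    case 0
    then show ?case using bounded by simp
  next
    case (Suc n)
    show ?case
    proof
      fix y assume "y \<in> B"
      then obtain y' where "y' \<in> B" "r * D y \<le> D y'"
        using contracting by blast
      with Suc have "r * D y \<le> c * (1/r) ^ n"
        by force
      with \<open>1 < r\<close> show "D y \<le> c * (1/r) ^ Suc n"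
        by (simp add: field_simps)
    qed
  qed
  moreover have "(\<lambda>n. c * (1/r) ^ n) \<longlonglongrightarrow> 0"
    using \<open>1 < r\<close> by (intro tendsto_mult_right_zero LIMSEQ_power_zero) simp
  ultimately show ?thesis
    using \<open>y \<in> B\<close> by (intro LIMSEQ_le_const) auto
qed

lemma subset_attractor:
  assumes K: "K \<noteq> {}" "closed K" "K \<subseteq> unit_sq" "hutchinson K \<subseteq> K"
    and K': "K' \<subseteq> unit_sq" "K' \<subseteq> hutchinson K'"
  shows "K' \<subseteq> K"
proof
  fix p assume "p \<in> K'"
  have "infdist p K \<le> 0"
  proof (rule nonpos_if_contracting[where c = 2 and r = 3, OF _ _ _ \<open>p \<in> K'\<close>])
    show "1 < (3::real)"
      by simp
    fix q assume q: "q \<in> K'"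
    obtain y where "y \<in> K"
      using K(1) by blast
    then show "infdist q K \<le> 2"
      using q K(3) K'(1) by (intro infdist_le2 dist_le_2_if_in_unit_sq) auto
    obtain m q' where m: "m \<in> Mset" and q': "q' \<in> K'" and q_eq: "q = cellpt m q'"
      using q K'(2) unfolding hutchinson_def by blast
    have "3 * infdist q K \<le> dist q' y" if "y \<in> K" for y
    proof -
      have "cellpt m y \<in> K"
        using that m K(4) unfolding hutchinson_def by blast
      then have "infdist q K \<le> dist q (cellpt m y)"
        by (rule infdist_le)
      then show ?thesis
        by (simp add: q_eq dist_cellpt)
    qed
    then have "3 * infdist q K \<le> infdist q' K"
      unfolding infdist_notempty[OF K(1)] by (rule cINF_greatest[OF K(1)])
    then show "\<exists>q'\<in>K'. 3 * infdist q K \<le> infdist q' K"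
      using q' by blast
  qed
  then show "p \<in> K"
    using in_closed_iff_infdist_zero[OF K(2,1)] infdist_nonneg[of p K] by simp
qed

lemma self_similar_map_unique:
  assumes next_in: "\<And>y. y \<in> B \<Longrightarrow> nx y \<in> B"
    and g: "\<And>y. y \<in> B \<Longrightarrow> g y \<in> unit_sq \<and> g y = cellpt (dg y) (g (nx y))"
    and g': "\<And>y. y \<in> B \<Longrightarrow> g' y \<in> unit_sq \<and> g' y = cellpt (dg y) (g' (nx y))"
    and "y \<in> B"
  shows "g y = g' y"
proof -
  have "dist (g y) (g' y) \<le> 0"
  proof (rule nonpos_if_contracting[where c = 2 and r = 3, OF _ _ _ \<open>y \<in> B\<close>])
    show "1 < (3::real)"
      by simp
    fix y assume y: "y \<in> B"
    then show "dist (g y) (g' y) \<le> 2"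
      using g g' dist_le_2_if_in_unit_sq by blast
    have "g y = cellpt (dg y) (g (nx y))" "g' y = cellpt (dg y) (g' (nx y))"
      using g[OF y] g'[OF y] by auto
    then have "3 * dist (g y) (g' y) = dist (g (nx y)) (g' (nx y))"
      by (simp add: dist_cellpt)
    then show "\<exists>y'\<in>B. 3 * dist (g y) (g' y) \<le> dist (g y') (g' y')"
      using next_in[OF y] by force
  qed
  then show ?thesis
    by simp
qed

lemma digit_exists:
  fixes s :: real
  assumes "0 \<le> s" "s \<le> 1"
  shows "\<exists>k\<in>{0,1,2::int}. 0 \<le> 3 * s - k \<and> 3 * s - k \<le> 1"
proof -
  consider "s \<le> 1/3" | "1/3 < s" "s \<le> 2/3" | "2/3 < s"
    by linarith
  then show ?thesis
  proof cases
    case 1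
    then show ?thesis using assms by (intro bexI[of _ 0]) auto
  next
    case 2
    then show ?thesis by (intro bexI[of _ 1]) auto
  next
    case 3
    then show ?thesis using assms by (intro bexI[of _ 2]) auto
  qed
qed

lemma M0_subset_hutchinson_M0: "M0 \<subseteq> hutchinson M0"
proof
  fix p assume "p \<in> M0"
  then obtain r s where p: "p = (r, s)" and rs: "0 \<le> r" "r \<le> 1" "0 \<le> s" "s \<le> 1"
    and edge: "r = 0 \<or> r = 1 \<or> s = 0 \<or> s = 1"
    by (auto simp: M0_def)
  obtain k :: int where k: "k \<in> {0,1,2}" "0 \<le> 3 * s - k" "3 * s - k \<le> 1"
    using digit_exists[OF rs(3,4)] by blast
  obtain j :: int where j: "j \<in> {0,1,2}" "0 \<le> 3 * r - j" "3 * r - j \<le> 1"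
    using digit_exists[OF rs(1,2)] by blast
  have in_cell: "p \<in> hutchinson M0" if "m \<in> Mset" "u \<in> M0" "p = cellpt m u" for m u
    using that unfolding hutchinson_def by blast
  from edge show "p \<in> hutchinson M0"
  proof (elim disjE)
    assume "r = 0"
    with k show ?thesis
      by (intro in_cell[of "(0, k)" "(0, 3 * s - k)"]) (auto simp: p cellpt_def Mset_def M0_def)
  next
    assume "r = 1"
    with k show ?thesis
      by (intro in_cell[of "(2, k)" "(1, 3 * s - k)"]) (auto simp: p cellpt_def Mset_def M0_def)
  next
    assume "s = 0"
    with j show ?thesis
      by (intro in_cell[of "(j, 0)" "(3 * r - j, 0)"]) (auto simp: p cellpt_def Mset_def M0_def)
  next
    assume "s = 1"
    with j show ?thesis
      by (intro in_cell[of "(j, 2)" "(3 * r - j, 1)"]) (auto simp: p cellpt_def Mset_def M0_def)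
  qed
qed

inductive_set boundary_orbit :: "pt set" where
  boundary: "p \<in> M0 \<Longrightarrow> p \<in> boundary_orbit"
| cell: "p \<in> boundary_orbit \<Longrightarrow> m \<in> Mset \<Longrightarrow> cellpt m p \<in> boundary_orbit"

lemma boundary_orbit_subset_unit_sq: "boundary_orbit \<subseteq> unit_sq"
proof
  fix p assume "p \<in> boundary_orbit"
  then show "p \<in> unit_sq"
    by induction (use M0_subset_unit_sq cellpt_in_unit_sq in blast)+
qed

lemma boundary_orbit_subset_hutchinson: "boundary_orbit \<subseteq> hutchinson boundary_orbit"
proof
  fix p assume "p \<in> boundary_orbit"
  then show "p \<in> hutchinson boundary_orbit"
  proof cases
    case boundary
    then show ?thesis
      using M0_subset_hutchinson_M0 boundary_orbit.boundary unfolding hutchinson_def by blast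
  next
    case cell
    then show ?thesis
      unfolding hutchinson_def by blast
  qed
qed

lemma closure_boundary_orbit_attractor:
  defines "K \<equiv> closure boundary_orbit"
  shows "K \<noteq> {} \<and> compact K \<and> K \<subseteq> unit_sq \<and> hutchinson K = K"
proof (intro conjI)
  show "K \<noteq> {}"
    using boundary_orbit.boundary[of "(0,0)"] closure_subset by (force simp: K_def M0_def)
  show K_unit: "K \<subseteq> unit_sq"
    unfolding K_def using boundary_orbit_subset_unit_sq
    by (intro closure_minimal compact_imp_closed compact_unit_sq)
  show "compact K"
    unfolding K_def compact_closure
    by (rule bounded_subset[OF compact_imp_bounded[OF compact_unit_sq] boundary_orbit_subset_unit_sq])
  have "cellpt m ` K \<subseteq> K" if "m \<in> Mset" for m
  proof -
    have "cellpt m ` boundary_orbit \<subseteq> closure boundary_orbit"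
      using that boundary_orbit.cell closure_subset by blast
    then show ?thesis
      unfolding K_def by (rule image_closure_subset[OF continuous_on_cellpt closed_closure])
  qed
  then have "hutchinson K \<subseteq> K"
    unfolding hutchinson_def by blast
  moreover have "K \<subseteq> hutchinson K"
  proof -
    have "boundary_orbit \<subseteq> hutchinson K"
      using boundary_orbit_subset_hutchinson hutchinson_mono[OF closure_subset]
      unfolding K_def by blast
    then show ?thesis
      using \<open>compact K\<close> unfolding K_def
      by (intro closure_minimal compact_imp_closed compact_hutchinson)
  qed
  ultimately show "hutchinson K = K"
    by blast
qed

lemma carpet_eq_closure: "carpet = closure boundary_orbit"
proof -
  let ?attractor = "\<lambda>K. K \<noteq> {} \<and> compact K \<and> K \<subseteq> unit_sq \<and> K = hutchinson K"
  have "?attractor (closure boundary_orbit)"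
    using closure_boundary_orbit_attractor by simp
  moreover have "K = closure boundary_orbit" if "?attractor K" for K
    using subset_attractor[of K "closure boundary_orbit"] subset_attractor[of "closure boundary_orbit" K]
      closure_boundary_orbit_attractor that
    by (metis compact_imp_closed order.refl order.antisym)
  ultimately show ?thesis
    unfolding carpet_def hutchinson_def[symmetric] by (rule the_equality)
qed

lemma
  shows carpet_nonempty: "carpet \<noteq> {}"
    and compact_carpet: "compact carpet"
    and carpet_subset_unit_sq: "carpet \<subseteq> unit_sq"
    and hutchinson_carpet: "hutchinson carpet = carpet"
  using closure_boundary_orbit_attractor by (simp_all add: carpet_eq_closure)

lemma M0_subset_carpet: "M0 \<subseteq> carpet"
  unfolding carpet_eq_closure using boundary_orbit.boundary closure_subset by blast

section \<open>Gluing of cells\<close>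

lemma M0_iff: "p \<in> M0 \<longleftrightarrow> p \<in> unit_sq \<and> (fst p \<in> {0,1} \<or> snd p \<in> {0,1})"
  by (cases p) (auto simp: M0_def unit_sq_def)

text \<open>Two representatives of the same point of \<open>M \<otimes> X\<close> are equal or lie on the boundaries of
  their cells at the same position: since \<open>S\<close> is injective this relation is transitive, hence it
  contains \<open>glue_rel X S\<close>.\<close>
definition glued :: "'a set \<Rightarrow> (pt \<Rightarrow> 'a) \<Rightarrow> (int \<times> int) \<times> 'a \<Rightarrow> (int \<times> int) \<times> 'a \<Rightarrow> bool" where
  "glued X S a b \<longleftrightarrow> a \<in> Mset \<times> X \<and> b \<in> Mset \<times> X \<and>
     (a = b \<or> (\<exists>p\<in>M0. \<exists>q\<in>M0. snd a = S p \<and> snd b = S q \<and> cellpt (fst a) p = cellpt (fst b) q))"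

lemma glued_trans:
  assumes "square_set X S" "glued X S a b" "glued X S b c"
  shows "glued X S a c"
proof -
  have inj: "inj_on S M0"
    using assms(1) by (simp add: square_set_def)
  consider "a = b" | "b = c"
    | p q p' q' where "p \<in> M0" "q \<in> M0" "p' \<in> M0" "q' \<in> M0"
        "snd a = S p" "snd b = S q" "snd b = S p'" "snd c = S q'"
        "cellpt (fst a) p = cellpt (fst b) q" "cellpt (fst b) p' = cellpt (fst c) q'"
    using assms(2,3) unfolding glued_def by blast
  then show ?thesis
  proof cases
    case 3
    then have "q = p'"
      using inj_onD[OF inj] by metis
    with 3 assms(2,3) show ?thesis
      unfolding glued_def by metis
  qed (use assms in auto)
qed

lemma glue_rel_imp_glued:
  assumes ss: "square_set X S" and "(a, b) \<in> glue_rel X S"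
  shows "glued X S a b"
proof -
  have gen: "glued X S a b \<and> glued X S b a" if "(a, b) \<in> glue_gen S" for a b
    using that ss unfolding glue_gen_def glued_def square_set_def by fastforce
  from assms(2) consider "(a, b) \<in> Id_on (Mset \<times> X)" | "(a, b) \<in> (glue_gen S \<union> (glue_gen S)\<inverse>)\<^sup>+"
    unfolding glue_rel_def by blast
  then show ?thesis
  proof cases
    case 1
    then show ?thesis by (auto simp: glued_def)
  next
    case 2
    then show ?thesis
      by (induction rule: trancl_induct) (use gen glued_trans[OF ss] in blast)+
  qed
qed

lemma equiv_glue_rel:
  assumes "square_set X S"
  shows "equiv (Mset \<times> X) (glue_rel X S)"
proof (rule equivI)
  show "glue_rel X S \<subseteq> (Mset \<times> X) \<times> (Mset \<times> X)"
    using glue_rel_imp_glued[OF assms] unfolding glued_def by auto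
  show "refl_on (Mset \<times> X) (glue_rel X S)"
    unfolding refl_on_def glue_rel_def by auto
  have "sym ((glue_gen S \<union> (glue_gen S)\<inverse>)\<^sup>+)"
    by (intro sym_trancl) (simp add: sym_Un_converse)
  then show "sym (glue_rel X S)"
    unfolding glue_rel_def by (intro sym_Un sym_Id_on)
  show "trans (glue_rel X S)"
    unfolding glue_rel_def by (rule transI) (auto intro: trancl_trans)
qed

lemma tensor_el_in_carrier: "m \<in> Mset \<Longrightarrow> x \<in> X \<Longrightarrow> tensor_el X S m x \<in> tensor_carrier X S"
  unfolding tensor_el_def tensor_carrier_def by (rule quotientI) simp

lemma tensor_carrier_elem:
  assumes "c \<in> tensor_carrier X S"
  obtains m x where "m \<in> Mset" "x \<in> X" "c = tensor_el X S m x"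
  using assms unfolding tensor_carrier_def tensor_el_def by (auto elim!: quotientE)

lemma tensor_el_eqI:
  "square_set X S \<Longrightarrow> ((m, x), (n, y)) \<in> glue_rel X S \<Longrightarrow> tensor_el X S m x = tensor_el X S n y"
  unfolding tensor_el_def using equiv_class_eq[OF equiv_glue_rel] by blast

lemma glued_if_mem_tensor_el:
  "square_set X S \<Longrightarrow> (n, y) \<in> tensor_el X S m x \<Longrightarrow> glued X S (m, x) (n, y)"
  unfolding tensor_el_def by (auto intro: glue_rel_imp_glued)

lemma tensor_class_eq_of_mem:
  assumes ss: "square_set X S" and c: "c \<in> tensor_carrier X S" and "(m, x) \<in> c"
  shows "m \<in> Mset \<and> x \<in> X \<and> c = tensor_el X S m x"
proof -
  obtain n y where "c = tensor_el X S n y"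
    using c by (rule tensor_carrier_elem)
  with assms(3) have rel: "((n, y), (m, x)) \<in> glue_rel X S"
    by (simp add: tensor_el_def)
  then have "glued X S (n, y) (m, x)"
    by (rule glue_rel_imp_glued[OF ss])
  then show ?thesis
    using \<open>c = tensor_el X S n y\<close> tensor_el_eqI[OF ss rel] by (simp add: glued_def)
qed

lemma some_mem_tensor_class:
  assumes "square_set X S" "c \<in> tensor_carrier X S"
  shows "(SOME b. b \<in> c) \<in> c"
proof -
  obtain m x where "m \<in> Mset" "x \<in> X" "c = tensor_el X S m x"
    using assms(2) by (rule tensor_carrier_elem)
  then have "(m, x) \<in> c"
    unfolding tensor_el_def using equiv_class_self[OF equiv_glue_rel[OF assms(1)]] by simp
  then show ?thesis
    by (rule someI)
qed

section \<open>The carpet as a coalgebra\<close>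

lemma square_set_carpet: "square_set carpet S_carpet"
  using M0_subset_carpet unfolding square_set_def S_carpet_def by auto

lemma tau_tensor_el:
  assumes "m \<in> Mset" "s \<in> carpet"
  shows "tau (tensor_el carpet S_carpet m s) = cellpt m s"
proof -
  let ?c = "tensor_el carpet S_carpet m s"
  obtain n t where nt: "(SOME b. b \<in> ?c) = (n, t)"
    by (cases "SOME b. b \<in> ?c")
  have "(n, t) \<in> ?c"
    using some_mem_tensor_class[OF square_set_carpet tensor_el_in_carrier[OF assms]] nt by simp
  then have "glued carpet S_carpet (m, s) (n, t)"
    by (rule glued_if_mem_tensor_el[OF square_set_carpet])
  then have "cellpt n t = cellpt m s"
    unfolding glued_def S_carpet_def by auto
  then show ?thesis
    unfolding tau_def nt by simp
qed

lemma adjacent_cells_meet_on_boundary: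
  assumes "adjacent m k" "s \<in> unit_sq" "u \<in> unit_sq" "cellpt m s = cellpt k u"
  shows "s \<in> M0 \<and> u \<in> M0"
proof -
  have "of_int (fst m) + fst s = of_int (fst k) + fst u" "of_int (snd m) + snd s = of_int (snd k) + snd u"
    using assms(4) by (simp_all add: cellpt_def prod_eq_iff)
  moreover have "\<bar>real_of_int (fst m) - of_int (fst k)\<bar> = 1 \<or> \<bar>real_of_int (snd m) - of_int (snd k)\<bar> = 1"
    using assms(1) unfolding adjacent_def by (auto simp flip: of_int_diff of_int_abs)
  ultimately have "\<bar>fst s - fst u\<bar> = 1 \<or> \<bar>snd s - snd u\<bar> = 1"
    by linarith
  then show ?thesis
    using assms(2,3) unfolding M0_iff unit_sq_def by auto
qed

lemma glue_rel_carpet_adjacent: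
  assumes "adjacent m k" "m \<in> Mset" "k \<in> Mset" "s \<in> unit_sq" "u \<in> unit_sq" "cellpt m s = cellpt k u"
  shows "((m, s), (k, u)) \<in> glue_rel carpet S_carpet"
proof -
  have "s \<in> M0" "u \<in> M0"
    using adjacent_cells_meet_on_boundary[OF assms(1,4,5,6)] by auto
  with assms have "((m, S_carpet s), (k, S_carpet u)) \<in> glue_gen S_carpet"
    unfolding glue_gen_def by blast
  then show ?thesis
    unfolding glue_rel_def S_carpet_def by blast
qed

lemma int_eq_or_dist_1:
  fixes a b :: int and x y :: real
  assumes "of_int a + x = of_int b + y" "0 \<le> x" "x \<le> 1" "0 \<le> y" "y \<le> 1"
  shows "a = b \<or> \<bar>a - b\<bar> = 1"
proof -
  have "real_of_int \<bar>a - b\<bar> < 2"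
    using assms by simp
  then show ?thesis
    by linarith
qed

text \<open>Diagonal neighbours are glued through a common edge neighbour; one of the two candidates
  is not the removed centre \<open>(1,1)\<close>.\<close>
lemma glue_rel_carpet:
  assumes mn: "m \<in> Mset" "n \<in> Mset" and st: "s \<in> carpet" "t \<in> carpet"
    and eq: "cellpt m s = cellpt n t"
  shows "((m, s), (n, t)) \<in> glue_rel carpet S_carpet"
proof -
  let ?R = "glue_rel carpet S_carpet"
  have unit: "s \<in> unit_sq" "t \<in> unit_sq"
    using st carpet_subset_unit_sq by auto
  have coords: "of_int (fst m) + fst s = of_int (fst n) + fst t" "of_int (snd m) + snd s = of_int (snd n) + snd t"
    using eq by (simp_all add: cellpt_def prod_eq_iff)
  have "fst m = fst n \<or> \<bar>fst m - fst n\<bar> = 1" "snd m = snd n \<or> \<bar>snd m - snd n\<bar> = 1"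
    using int_eq_or_dist_1[OF coords(1)] int_eq_or_dist_1[OF coords(2)] unit by (auto simp: unit_sq_def)
  then consider "m = n" | "adjacent m n" | "\<bar>fst m - fst n\<bar> = 1" "\<bar>snd m - snd n\<bar> = 1"
    unfolding adjacent_def by (cases m, cases n) auto
  then show ?thesis
  proof cases
    case 1
    then have "s = t"
      using eq uncell_cellpt by metis
    with 1 show ?thesis
      using mn st unfolding glue_rel_def by auto
  next
    case 2
    then show ?thesis
      using glue_rel_carpet_adjacent mn unit eq by blast
  next
    case 3
    have "\<exists>k\<in>Mset. \<exists>u\<in>unit_sq. adjacent m k \<and> adjacent k n \<and> cellpt k u = cellpt m s"
    proof (cases "(fst n, snd m) \<in> Mset")
      case True
      then show ?thesis
        using 3 coords unit
        by (intro bexI[of _ "(fst n, snd m)"] bexI[of _ "(fst t, snd s)"])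
          (auto simp: adjacent_def cellpt_def unit_sq_def abs_minus_commute)
    next
      case False
      then have "fst n = 1" "snd m = 1"
        using Mset_coords[OF mn(1)] Mset_coords[OF mn(2)] by (auto simp: Mset_def)
      then have "fst m \<noteq> 1" "snd n \<noteq> 1"
        using 3 by auto
      then have "(fst m, snd n) \<in> Mset"
        using Mset_coords[OF mn(1)] Mset_coords[OF mn(2)] by (auto simp: Mset_def)
      then show ?thesis
        using 3 coords unit
        by (intro bexI[of _ "(fst m, snd n)"] bexI[of _ "(fst s, snd t)"])
          (auto simp: adjacent_def cellpt_def unit_sq_def abs_minus_commute)
    qed
    then obtain k u where "k \<in> Mset" "u \<in> unit_sq" "adjacent m k" "adjacent k n" "cellpt k u = cellpt m s"
      by blast
    then have "((m, s), (k, u)) \<in> ?R" "((k, u), (n, t)) \<in> ?R"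
      using glue_rel_carpet_adjacent mn unit eq by metis+
    then show ?thesis
      using equiv_glue_rel[OF square_set_carpet] by (auto elim: equivE transE)
  qed
qed

lemma bij_betw_tau: "bij_betw tau (tensor_carrier carpet S_carpet) carpet"
proof (rule bij_betw_imageI)
  show "inj_on tau (tensor_carrier carpet S_carpet)"
  proof (rule inj_onI)
    fix c c' assume "c \<in> tensor_carrier carpet S_carpet" "c' \<in> tensor_carrier carpet S_carpet"
      and tau_eq: "tau c = tau c'"
    then obtain m s n t where ms: "m \<in> Mset" "s \<in> carpet" "c = tensor_el carpet S_carpet m s"
      and nt: "n \<in> Mset" "t \<in> carpet" "c' = tensor_el carpet S_carpet n t"
      by (metis tensor_carrier_elem)
    then have "cellpt m s = cellpt n t"
      using tau_eq by (simp add: tau_tensor_el)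
    then have "((m, s), (n, t)) \<in> glue_rel carpet S_carpet"
      using glue_rel_carpet ms nt by blast
    then show "c = c'"
      using ms nt tensor_el_eqI[OF square_set_carpet] by simp
  qed
  have "tau ` tensor_carrier carpet S_carpet = hutchinson carpet"
  proof
    show "tau ` tensor_carrier carpet S_carpet \<subseteq> hutchinson carpet"
      by (auto simp: hutchinson_def tau_tensor_el elim!: tensor_carrier_elem)
    show "hutchinson carpet \<subseteq> tau ` tensor_carrier carpet S_carpet"
    proof
      fix p assume "p \<in> hutchinson carpet"
      then obtain m s where "m \<in> Mset" "s \<in> carpet" "p = cellpt m s"
        unfolding hutchinson_def by blast
      then show "p \<in> tau ` tensor_carrier carpet S_carpet"
        using tau_tensor_el tensor_el_in_carrier by (metis image_eqI)
    qed
  qed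
  then show "tau ` tensor_carrier carpet S_carpet = carpet"
    by (simp add: hutchinson_carpet)
qed

lemma bij_betw_tau_inv: "bij_betw tau_inv carpet (tensor_carrier carpet S_carpet)"
  unfolding tau_inv_def by (rule bij_betw_inv_into[OF bij_betw_tau])

lemma tau_inv_cellpt: "m \<in> Mset \<Longrightarrow> s \<in> carpet \<Longrightarrow> tau_inv (cellpt m s) = tensor_el carpet S_carpet m s"
  unfolding tau_inv_def
  by (rule inv_into_f_eq[OF bij_betw_imp_inj_on[OF bij_betw_tau] tensor_el_in_carrier tau_tensor_el])

lemma tau_tau_inv: "p \<in> carpet \<Longrightarrow> tau (tau_inv p) = p"
  unfolding tau_inv_def by (rule bij_betw_inv_into_right[OF bij_betw_tau])

lemma M0_if_cellpt_in_M0: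
  assumes "cellpt m u \<in> M0" "m \<in> Mset" "u \<in> unit_sq"
  shows "u \<in> M0"
proof -
  have "fst m \<in> {0,1,2}" "snd m \<in> {0,1,2}"
    using Mset_coords[OF assms(2)] by auto
  then have "real_of_int (fst m) \<in> {0,1,2}" "real_of_int (snd m) \<in> {0,1,2}"
    by auto
  then show ?thesis
    using assms(1,3) unfolding M0_iff unit_sq_def cellpt_def by auto
qed

lemma tensor_S_boundary:
  assumes "p \<in> M0"
  shows "\<exists>m\<in>Mset. \<exists>u\<in>M0. cellpt m u = p \<and> tensor_S X S p = tensor_el X S m (S u)"
proof -
  have "\<exists>m. m \<in> Mset \<and> p \<in> cellpt m ` unit_sq"
    using assms M0_subset_hutchinson_M0 M0_subset_unit_sq unfolding hutchinson_def by blast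
  then obtain m where m: "m \<in> Mset" "p \<in> cellpt m ` unit_sq"
    and tensor_S_eq: "tensor_S X S p = tensor_el X S m (S (uncell m p))"
    unfolding tensor_S_def Let_def by (metis (mono_tags, lifting) someI_ex)
  then obtain u where u: "u \<in> unit_sq" "cellpt m u = p"
    by blast
  moreover have "u \<in> M0"
    using M0_if_cellpt_in_M0 assms m(1) u by blast
  moreover have "tensor_S X S p = tensor_el X S m (S u)"
    using tensor_S_eq unfolding u(2)[symmetric] by simp
  ultimately show ?thesis
    using m(1) by blast
qed

lemma coalgebra_carpet: "coalgebra carpet S_carpet tau_inv"
  unfolding coalgebra_def squaset_mor_def
proof (intro conjI square_set_carpet ballI)
  show "tau_inv ` carpet \<subseteq> tensor_carrier carpet S_carpet"
    using bij_betw_imp_surj_on[OF bij_betw_tau_inv] by simp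
  fix p assume "p \<in> M0"
  then obtain m u where "m \<in> Mset" "u \<in> M0" and p: "cellpt m u = p"
    and "tensor_S carpet S_carpet p = tensor_el carpet S_carpet m (S_carpet u)"
    using tensor_S_boundary by blast
  moreover have "tau_inv (cellpt m u) = tensor_el carpet S_carpet m u"
    using tau_inv_cellpt \<open>m \<in> Mset\<close> \<open>u \<in> M0\<close> M0_subset_carpet by blast
  ultimately show "tau_inv (S_carpet p) = tensor_S carpet S_carpet p"
    by (simp add: S_carpet_def)
qed

section \<open>Finality\<close>

definition coalg_rep :: "('a \<Rightarrow> ((int \<times> int) \<times> 'a) set) \<Rightarrow> 'a \<Rightarrow> (int \<times> int) \<times> 'a" where
  "coalg_rep a x = (SOME mx. mx \<in> a x)"

definition coalg_digit :: "('a \<Rightarrow> ((int \<times> int) \<times> 'a) set) \<Rightarrow> 'a \<Rightarrow> int \<times> int" where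
  "coalg_digit a x = fst (coalg_rep a x)"

definition coalg_next :: "('a \<Rightarrow> ((int \<times> int) \<times> 'a) set) \<Rightarrow> 'a \<Rightarrow> 'a" where
  "coalg_next a x = snd (coalg_rep a x)"

lemma coalg_rep_eq: "coalg_rep a x = (coalg_digit a x, coalg_next a x)"
  by (simp add: coalg_digit_def coalg_next_def)

lemma coalg_step:
  assumes "coalgebra A SA a" "x \<in> A"
  shows "coalg_rep a x \<in> a x" and "coalg_digit a x \<in> Mset" and "coalg_next a x \<in> A"
    and "a x = tensor_el A SA (coalg_digit a x) (coalg_next a x)"
proof -
  have ss: "square_set A SA" and "a x \<in> tensor_carrier A SA"
    using assms unfolding coalgebra_def squaset_mor_def by auto
  then show rep: "coalg_rep a x \<in> a x"
    unfolding coalg_rep_def by (rule some_mem_tensor_class)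
  with tensor_class_eq_of_mem[OF ss \<open>a x \<in> tensor_carrier A SA\<close>]
  show "coalg_digit a x \<in> Mset" "coalg_next a x \<in> A"
    "a x = tensor_el A SA (coalg_digit a x) (coalg_next a x)"
    by (auto simp: coalg_rep_eq)
qed

lemma funpow_coalg_next_in:
  "coalgebra A SA a \<Longrightarrow> x \<in> A \<Longrightarrow> (coalg_next a ^^ k) x \<in> A"
  by (induction k) (auto intro: coalg_step(3))

text \<open>No well-definedness of \<open>tensor_map\<close> is needed: it reads its argument through the same
  choice of representative as \<open>coalg_rep\<close>.\<close>
lemma tensor_map_coalg:
  "tensor_map Y T f (a x) = tensor_el Y T (coalg_digit a x) (f (coalg_next a x))"
  by (simp add: tensor_map_def coalg_rep_def coalg_digit_def coalg_next_def split_beta Let_def)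

definition ternary :: "(nat \<Rightarrow> int) \<Rightarrow> real" where
  "ternary d = (\<Sum>k. of_int (d k) / 3 ^ Suc k)"

lemma sums_two_div_pow3: "(\<lambda>k. 2 / 3 ^ Suc k :: real) sums 1"
proof -
  have "(\<lambda>k. 2/3 * (1/3::real) ^ k) sums (2/3 * (1 / (1 - 1/3)))"
    by (intro sums_mult geometric_sums) simp
  then show ?thesis
    by (simp add: power_one_over)
qed

lemma ternary_term_bounds:
  assumes "e k \<in> {0,1,2}"
  shows "0 \<le> (of_int (e k) / 3 ^ Suc k :: real)" and "of_int (e k) / 3 ^ Suc k \<le> (2 / 3 ^ Suc k :: real)"
  using assms by (auto simp: divide_right_mono)

lemma summable_ternary:
  assumes "\<And>k. e k \<in> {0,1,2}"
  shows "summable (\<lambda>k. of_int (e k) / 3 ^ Suc k :: real)"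
proof (rule summable_comparison_test'[OF sums_summable[OF sums_two_div_pow3]])
  show "norm (of_int (e k) / 3 ^ Suc k :: real) \<le> 2 / 3 ^ Suc k" for k
    using ternary_term_bounds[of e k] assms by (metis abs_of_nonneg real_norm_def)
qed

lemma
  assumes digits: "\<And>k. d k \<in> {0,1,2}"
  shows ternary_nonneg: "0 \<le> ternary d" and ternary_le_1: "ternary d \<le> 1"
    and ternary_rec: "ternary d = (of_int (d 0) + ternary (\<lambda>k. d (Suc k))) / 3"
proof -
  note summable = summable_ternary[of d, OF digits]
  show "0 \<le> ternary d"
    unfolding ternary_def using summable ternary_term_bounds digits by (intro suminf_nonneg) auto
  show "ternary d \<le> 1"
    unfolding ternary_def sums_unique[OF sums_two_div_pow3]
    using summable sums_summable[OF sums_two_div_pow3] ternary_term_bounds digits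
    by (intro suminf_le) auto
  have "ternary d = of_int (d 0) / 3 + (\<Sum>k. of_int (d (Suc k)) / 3 ^ Suc (Suc k))"
    unfolding ternary_def using suminf_split_head[OF summable] by simp
  also have "(\<lambda>k. of_int (d (Suc k)) / 3 ^ Suc (Suc k) :: real) = (\<lambda>k. of_int (d (Suc k)) / 3 ^ Suc k / 3)"
    by simp
  also have "(\<Sum>k. of_int (d (Suc k)) / 3 ^ Suc k / 3) = ternary (\<lambda>k. d (Suc k)) / 3"
    unfolding ternary_def using summable_ternary[of "\<lambda>k. d (Suc k)"] digits by (intro suminf_divide) blast
  finally show "ternary d = (of_int (d 0) + ternary (\<lambda>k. d (Suc k))) / 3"
    by (simp add: add_divide_distrib)
qed

definition carpet_unfold :: "('a \<Rightarrow> ((int \<times> int) \<times> 'a) set) \<Rightarrow> 'a \<Rightarrow> pt" where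
  "carpet_unfold a x =
     (ternary (\<lambda>k. fst (coalg_digit a ((coalg_next a ^^ k) x))),
      ternary (\<lambda>k. snd (coalg_digit a ((coalg_next a ^^ k) x))))"

lemma carpet_unfold_cellpt:
  assumes co: "coalgebra A SA a" and "x \<in> A"
  shows "carpet_unfold a x \<in> unit_sq \<and>
    carpet_unfold a x = cellpt (coalg_digit a x) (carpet_unfold a (coalg_next a x))"
proof -
  have "coalg_digit a ((coalg_next a ^^ k) x) \<in> Mset" for k
    using coalg_step(2)[OF co funpow_coalg_next_in[OF co \<open>x \<in> A\<close>]] .
  then have "fst (coalg_digit a ((coalg_next a ^^ k) x)) \<in> {0,1,2}"
    "snd (coalg_digit a ((coalg_next a ^^ k) x)) \<in> {0,1,2}" for k
    using Mset_coords by blast+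
  note fst_digits = ternary_nonneg[OF this(1)] ternary_le_1[OF this(1)] ternary_rec[OF this(1)]
    and snd_digits = ternary_nonneg[OF this(2)] ternary_le_1[OF this(2)] ternary_rec[OF this(2)]
  have shift: "(coalg_next a ^^ Suc k) x = (coalg_next a ^^ k) (coalg_next a x)" for k
    by (simp add: funpow_Suc_right del: funpow.simps)
  show ?thesis
  proof
    show "carpet_unfold a x \<in> unit_sq"
      using fst_digits(1,2) snd_digits(1,2) by (simp add: carpet_unfold_def unit_sq_def)
    show "carpet_unfold a x = cellpt (coalg_digit a x) (carpet_unfold a (coalg_next a x))"
      unfolding carpet_unfold_def cellpt_def using fst_digits(3) snd_digits(3) by (simp only: shift) simp
  qed
qed

lemma carpet_unfold_in_carpet:
  assumes co: "coalgebra A SA a" and "x \<in> A"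
  shows "carpet_unfold a x \<in> carpet"
proof -
  have "carpet_unfold a ` A \<subseteq> carpet"
  proof (rule subset_attractor)
    show "carpet \<noteq> {}" "closed carpet" "carpet \<subseteq> unit_sq" "hutchinson carpet \<subseteq> carpet"
      using carpet_nonempty compact_carpet carpet_subset_unit_sq hutchinson_carpet
      by (auto intro: compact_imp_closed)
    show "carpet_unfold a ` A \<subseteq> unit_sq"
      using carpet_unfold_cellpt[OF co] by blast
    show "carpet_unfold a ` A \<subseteq> hutchinson (carpet_unfold a ` A)"
    proof
      fix p assume "p \<in> carpet_unfold a ` A"
      then obtain y where "y \<in> A" "p = carpet_unfold a y"
        by blast
      then have "p \<in> cellpt (coalg_digit a y) ` carpet_unfold a ` A"
        using carpet_unfold_cellpt[OF co] coalg_step(3)[OF co] by blast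
      then show "p \<in> hutchinson (carpet_unfold a ` A)"
        unfolding hutchinson_def using coalg_step(2)[OF co \<open>y \<in> A\<close>] by blast
    qed
  qed
  then show ?thesis
    using \<open>x \<in> A\<close> by blast
qed

lemma coalg_boundary_step:
  assumes co: "coalgebra A SA a" and p: "p \<in> M0"
  shows "\<exists>q\<in>M0. coalg_next a (SA p) = SA q \<and> cellpt (coalg_digit a (SA p)) q = p"
proof -
  have ss: "square_set A SA" and inj: "inj_on SA M0" and "SA p \<in> A"
    and boundary_eq: "a (SA p) = tensor_S A SA p"
    using co p unfolding coalgebra_def squaset_mor_def square_set_def by auto
  obtain m u where "m \<in> Mset" "u \<in> M0" "cellpt m u = p" and "a (SA p) = tensor_el A SA m (SA u)"
    using tensor_S_boundary[OF p] boundary_eq by metis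
  then have "glued A SA (m, SA u) (coalg_digit a (SA p), coalg_next a (SA p))"
    using coalg_step(1)[OF co \<open>SA p \<in> A\<close>] glued_if_mem_tensor_el[OF ss] coalg_rep_eq by metis
  then consider "(m, SA u) = (coalg_digit a (SA p), coalg_next a (SA p))"
    | p' q' where "p' \<in> M0" "q' \<in> M0" "SA u = SA p'" "coalg_next a (SA p) = SA q'"
        "cellpt m p' = cellpt (coalg_digit a (SA p)) q'"
    unfolding glued_def by auto
  then show ?thesis
  proof cases
    case 1
    then show ?thesis
      using \<open>u \<in> M0\<close> \<open>cellpt m u = p\<close> by (intro bexI[of _ u]) auto
  next
    case 2
    then have "p' = u"
      using inj_onD[OF inj] \<open>u \<in> M0\<close> by metis
    with 2 show ?thesis
      using \<open>cellpt m u = p\<close> by auto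
  qed
qed

lemma carpet_unfold_boundary:
  assumes co: "coalgebra A SA a" and "p \<in> M0"
  shows "carpet_unfold a (SA p) = p"
proof -
  have inj: "inj_on SA M0" and "SA ` M0 \<subseteq> A"
    using co unfolding coalgebra_def square_set_def by auto
  let ?coord = "inv_into M0 SA"
  have next_in: "coalg_next a y \<in> SA ` M0" if "y \<in> SA ` M0" for y
    using that coalg_boundary_step[OF co] by blast
  have unfold_rec: "carpet_unfold a y \<in> unit_sq \<and>
      carpet_unfold a y = cellpt (coalg_digit a y) (carpet_unfold a (coalg_next a y))"
    if "y \<in> SA ` M0" for y
    using that \<open>SA ` M0 \<subseteq> A\<close> carpet_unfold_cellpt[OF co] by blast
  \<comment> \<open>the coordinates of boundary points obey the same recursion as \<open>carpet_unfold\<close>\<close>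
  have coord_rec: "?coord y \<in> unit_sq \<and> ?coord y = cellpt (coalg_digit a y) (?coord (coalg_next a y))"
    if y: "y \<in> SA ` M0" for y
  proof -
    obtain p' where "p' \<in> M0" "y = SA p'"
      using y by blast
    moreover obtain q where "q \<in> M0" "coalg_next a (SA p') = SA q" "cellpt (coalg_digit a (SA p')) q = p'"
      using coalg_boundary_step[OF co \<open>p' \<in> M0\<close>] by blast
    ultimately show ?thesis
      using M0_subset_unit_sq inv_into_f_f[OF inj] by auto
  qed
  have "carpet_unfold a (SA p) = ?coord (SA p)"
    by (rule self_similar_map_unique[where B = "SA ` M0" and nx = "coalg_next a" and dg = "coalg_digit a",
          OF next_in unfold_rec coord_rec imageI[OF \<open>p \<in> M0\<close>]])
  then show ?thesis
    using inv_into_f_f[OF inj \<open>p \<in> M0\<close>] by simp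
qed

lemma coalg_mor_carpet_unfold:
  assumes co: "coalgebra A SA a"
  shows "coalg_mor A SA a carpet S_carpet tau_inv (carpet_unfold a)"
  unfolding coalg_mor_def squaset_mor_def
proof (intro conjI ballI)
  show "carpet_unfold a ` A \<subseteq> carpet"
    using carpet_unfold_in_carpet[OF co] by blast
  show "carpet_unfold a (SA p) = S_carpet p" if "p \<in> M0" for p
    using carpet_unfold_boundary[OF co that] by (simp add: S_carpet_def)
  fix x assume "x \<in> A"
  have "tau_inv (cellpt (coalg_digit a x) (carpet_unfold a (coalg_next a x))) =
      tensor_el carpet S_carpet (coalg_digit a x) (carpet_unfold a (coalg_next a x))"
    using coalg_step(2,3)[OF co \<open>x \<in> A\<close>] carpet_unfold_in_carpet[OF co] by (intro tau_inv_cellpt)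
  then have "tau_inv (carpet_unfold a x) =
      tensor_el carpet S_carpet (coalg_digit a x) (carpet_unfold a (coalg_next a x))"
    using carpet_unfold_cellpt[OF co \<open>x \<in> A\<close>] by simp
  then show "tau_inv (carpet_unfold a x) = tensor_map carpet S_carpet (carpet_unfold a) (a x)"
    by (simp add: tensor_map_coalg)
qed

lemma coalg_mor_to_carpet_unique:
  assumes co: "coalgebra A SA a" and h: "coalg_mor A SA a carpet S_carpet tau_inv h" and "x \<in> A"
  shows "h x = carpet_unfold a x"
proof -
  have h_carpet: "h ` A \<subseteq> carpet"
    and h_tau_inv: "\<And>y. y \<in> A \<Longrightarrow> tau_inv (h y) = tensor_map carpet S_carpet h (a y)"
    using h unfolding coalg_mor_def squaset_mor_def by auto
  have h_rec: "h y \<in> unit_sq \<and> h y = cellpt (coalg_digit a y) (h (coalg_next a y))" if "y \<in> A" for y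
  proof
    show "h y \<in> unit_sq"
      using that h_carpet carpet_subset_unit_sq by blast
    have "h y \<in> carpet"
      using that h_carpet by blast
    then have "h y = tau (tau_inv (h y))"
      by (simp add: tau_tau_inv)
    also have "\<dots> = tau (tensor_el carpet S_carpet (coalg_digit a y) (h (coalg_next a y)))"
      using h_tau_inv[OF that] by (simp add: tensor_map_coalg)
    also have "\<dots> = cellpt (coalg_digit a y) (h (coalg_next a y))"
      using tau_tensor_el coalg_step(2,3)[OF co that] h_carpet by blast
    finally show "h y = cellpt (coalg_digit a y) (h (coalg_next a y))" .
  qed
  show ?thesis
    by (rule self_similar_map_unique[where g = h and g' = "carpet_unfold a",
          OF coalg_step(3)[OF co] h_rec carpet_unfold_cellpt[OF co] \<open>x \<in> A\<close>])
qed

theorem mainTheorem5: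
  shows "coalgebra carpet S_carpet tau_inv \<and>
    (\<forall>(A :: 'a set) SA a. coalgebra A SA a \<longrightarrow>
       (\<exists>h. coalg_mor A SA a carpet S_carpet tau_inv h \<and>
            (\<forall>h'. coalg_mor A SA a carpet S_carpet tau_inv h' \<longrightarrow> (\<forall>x\<in>A. h' x = h x))))"
proof (intro conjI allI impI)
  show "coalgebra carpet S_carpet tau_inv"
    by (rule coalgebra_carpet)
  fix A :: "'a set" and SA a
  assume co: "coalgebra A SA a"
  show "\<exists>h. coalg_mor A SA a carpet S_carpet tau_inv h \<and>
      (\<forall>h'. coalg_mor A SA a carpet S_carpet tau_inv h' \<longrightarrow> (\<forall>x\<in>A. h' x = h x))"
    using coalg_mor_carpet_unfold[OF co] coalg_mor_to_carpet_unique[OF co] by blast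
qed

end
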